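(* Let $(G_n)$ be a sequence of graphs, $G_n$ having vertex set $V$ with $|V|=n$, average degree $d$, minimum degree $\delta$, maximum degree $\Delta$, and let $\lambda=\lambda(n)$ satisfy $|\lambda_i|\le\lambda$ for all adjacency eigenvalues $\lambda_i$, $i\ge2$. Suppose $\Delta-\delta\le R\lambda$ for a constant $R>0$ and $\lambda/d\to0$. Then for all sufficiently large $n$, for all $U,W\subseteq V$, $$\left|e(U,W)-\frac{d}{n}|U||W|\right|\le\overline\lambda\sqrt{|U||W|},\qquad\text{where }\overline\lambda=(10R+1)\lambda.$$
   Context: Adjacency eigenvalues are ordered $\lambda_1\ge\dots\ge\lambda_n$. For $U,W\subseteq V$, $e(U,W)$ is the number of ordered pairs $(u,w)$ with $u\in U$, $w\in W$ and $u$ adjacent to $w$. *)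

theory Defs
  imports "HOL-Analysis.Analysis" "Jordan_Normal_Form.Char_Poly"
begin

definition simple_graph_on :: "nat \<Rightarrow> (nat \<Rightarrow> nat \<Rightarrow> bool) \<Rightarrow> bool" where
  "simple_graph_on n E \<longleftrightarrow> (\<forall>u<n. \<forall>v<n. E u v = E v u) \<and> (\<forall>u<n. \<not> E u u)"

definition adj_mat :: "nat \<Rightarrow> (nat \<Rightarrow> nat \<Rightarrow> bool) \<Rightarrow> real mat" where
  "adj_mat n E = mat n n (\<lambda>(i, j). if E i j then 1 else 0)"

text \<open>Adjacency eigenvalues (with multiplicity) sorted in nonincreasing order:
  list index i corresponds to lambda_(i+1).\<close>
definition adj_eigenvalues :: "nat \<Rightarrow> (nat \<Rightarrow> nat \<Rightarrow> bool) \<Rightarrow> real list" where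
  "adj_eigenvalues n E = rev (sorted_list_of_multiset (proots (char_poly (adj_mat n E))))"

definition degree_in :: "nat \<Rightarrow> (nat \<Rightarrow> nat \<Rightarrow> bool) \<Rightarrow> nat \<Rightarrow> nat" where
  "degree_in n E v = card {u. u < n \<and> E v u}"

definition avg_degree :: "nat \<Rightarrow> (nat \<Rightarrow> nat \<Rightarrow> bool) \<Rightarrow> real" where
  "avg_degree n E = (\<Sum>v<n. real (degree_in n E v)) / real n"

definition min_degree :: "nat \<Rightarrow> (nat \<Rightarrow> nat \<Rightarrow> bool) \<Rightarrow> nat" where
  "min_degree n E = Min (degree_in n E ` {..<n})"

definition max_degree :: "nat \<Rightarrow> (nat \<Rightarrow> nat \<Rightarrow> bool) \<Rightarrow> nat" where
  "max_degree n E = Max (degree_in n E ` {..<n})"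

definition edges_between :: "(nat \<Rightarrow> nat \<Rightarrow> bool) \<Rightarrow> nat set \<Rightarrow> nat set \<Rightarrow> nat" where
  "edges_between E U W = card {(u, w). u \<in> U \<and> w \<in> W \<and> E u w}"

end

theory Submission
  imports Defs "Jordan_Normal_Form.Schur_Decomposition" "Jordan_Normal_Form.Spectral_Radius"
    "HOL-Combinatorics.Permutations"
begin

text \<open>Write the adjacency matrix as \<open>A = \<Sum>i. \<nu>\<^sub>i \<phi>\<^sub>i \<phi>\<^sub>i\<^sup>T\<close> with an orthonormal eigenbasis
  (the real spectral theorem, by deflation). Let \<open>u\<close> be the normalised all-ones
  vector. Since all degrees lie within \<open>R\<lambda>\<close> of the average degree \<open>d\<close>, \<open>\<parallel>(A - d) u\<parallel> \<le> R\<lambda>\<close>;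
  as \<open>|\<nu>\<^sub>i - d| \<ge> d/2\<close> for \<open>i \<ge> 2\<close>, this forces \<open>u\<close> to lie within \<open>2R\<lambda>/d\<close> of the top
  eigenvector and the top eigenvalue to lie within \<open>2R\<lambda>\<close> of \<open>d\<close>. Consequently
  \<open>A - (d/n) J\<close> has operator norm at most \<open>(6R + 1) \<lambda>\<close> once \<open>\<lambda>/d\<close> is small, and
  \<open>e(U,W) - (d/n)|U||W| = 1\<^sub>U\<^sup>T (A - (d/n) J) 1\<^sub>W\<close> is bounded by Cauchy--Schwarz.\<close>

definition orthonormal_mat :: "nat \<Rightarrow> real mat \<Rightarrow> bool" where
  "orthonormal_mat n P \<longleftrightarrow>
     P \<in> carrier_mat n n \<and> transpose_mat P * P = 1\<^sub>m n \<and> P * transpose_mat P = 1\<^sub>m n"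

lemma orthonormal_matI:
  assumes "P \<in> carrier_mat n n" and "transpose_mat P * P = 1\<^sub>m n"
  shows "orthonormal_mat n P"
  using assms mat_mult_left_right_inverse[of "transpose_mat P" n P]
  unfolding orthonormal_mat_def by auto

lemma orthonormal_mat_mult:
  assumes P: "orthonormal_mat n P" and Q: "orthonormal_mat n Q"
  shows "orthonormal_mat n (P * Q)"
proof (rule orthonormal_matI)
  have P': "P \<in> carrier_mat n n" "transpose_mat P * P = 1\<^sub>m n" and Q': "Q \<in> carrier_mat n n"
    "transpose_mat Q * Q = 1\<^sub>m n" using P Q unfolding orthonormal_mat_def by auto
  then show "P * Q \<in> carrier_mat n n" by simp
  have "transpose_mat P * (P * Q) = Q"
    using P' Q' by (simp flip: assoc_mult_mat[of _ n n _ n _ n])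
  then show "transpose_mat (P * Q) * (P * Q) = 1\<^sub>m n"
    using P' Q' by (simp add: transpose_mult[of _ n n _ n] assoc_mult_mat[of _ n n _ n _ n])
qed

lemma mult_four_block_mat_diag:
  fixes A B C D :: "'a :: comm_ring_1 mat"
  assumes "A \<in> carrier_mat 1 1" "B \<in> carrier_mat 1 1" "C \<in> carrier_mat m m" "D \<in> carrier_mat m m"
  shows "four_block_mat A (0\<^sub>m 1 m) (0\<^sub>m m 1) C * four_block_mat B (0\<^sub>m 1 m) (0\<^sub>m m 1) D
     = four_block_mat (A * B) (0\<^sub>m 1 m) (0\<^sub>m m 1) (C * D)"
proof -
  have "four_block_mat A (0\<^sub>m 1 m) (0\<^sub>m m 1) C * four_block_mat B (0\<^sub>m 1 m) (0\<^sub>m m 1) D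
     = four_block_mat (A * B + 0\<^sub>m 1 m * 0\<^sub>m m 1) (A * 0\<^sub>m 1 m + 0\<^sub>m 1 m * D)
         (0\<^sub>m m 1 * B + C * 0\<^sub>m m 1) (0\<^sub>m m 1 * 0\<^sub>m 1 m + C * D)"
    using assms by (intro mult_four_block_mat) auto
  also have "\<dots> = four_block_mat (A * B) (0\<^sub>m 1 m) (0\<^sub>m m 1) (C * D)"
    using assms by (intro cong_four_block_mat) auto
  finally show ?thesis .
qed

lemma transpose_four_block_mat_diag:
  assumes "A \<in> carrier_mat 1 1" and "C \<in> carrier_mat m m"
  shows "transpose_mat (four_block_mat A (0\<^sub>m 1 m) (0\<^sub>m m 1) C)
     = four_block_mat (transpose_mat A) (0\<^sub>m 1 m) (0\<^sub>m m 1) (transpose_mat C)"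
  using assms by (subst transpose_four_block_mat[of _ 1 1 _ m _ m]) auto

lemma orthonormal_mat_four_block:
  assumes "orthonormal_mat m P"
  shows "orthonormal_mat (Suc m) (four_block_mat (1\<^sub>m 1) (0\<^sub>m 1 m) (0\<^sub>m m 1) P)"
proof (rule orthonormal_matI)
  have P: "P \<in> carrier_mat m m" and PtP: "transpose_mat P * P = 1\<^sub>m m"
    using assms unfolding orthonormal_mat_def by auto
  then show "four_block_mat (1\<^sub>m 1) (0\<^sub>m 1 m) (0\<^sub>m m 1) P \<in> carrier_mat (Suc m) (Suc m)"
    using four_block_carrier_mat[OF one_carrier_mat[of 1] P] by simp
  have "transpose_mat (four_block_mat (1\<^sub>m 1) (0\<^sub>m 1 m) (0\<^sub>m m 1) P)
      = four_block_mat (1\<^sub>m 1) (0\<^sub>m 1 m) (0\<^sub>m m 1) (transpose_mat P)"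
    using transpose_four_block_mat_diag[OF one_carrier_mat P] by simp
  then show "transpose_mat (four_block_mat (1\<^sub>m 1) (0\<^sub>m 1 m) (0\<^sub>m m 1) P)
      * four_block_mat (1\<^sub>m 1) (0\<^sub>m 1 m) (0\<^sub>m m 1) P = 1\<^sub>m (Suc m)"
    using P PtP mult_four_block_mat_diag[OF one_carrier_mat one_carrier_mat _ P, of "transpose_mat P"]
    by simp
qed

lemma eigenvalue_real_symmetric_is_real:
  fixes A :: "real mat"
  assumes A: "A \<in> carrier_mat n n" and sym: "transpose_mat A = A"
    and ev: "eigenvalue (map_mat complex_of_real A) z"
  shows "cnj z = z"
proof -
  let ?C = "map_mat complex_of_real A"
  obtain v where "eigenvector ?C v z" using ev unfolding eigenvalue_def by blast
  then have v: "v \<in> carrier_vec n" and v0: "v \<noteq> 0\<^sub>v n" and Cv: "?C *\<^sub>v v = z \<cdot>\<^sub>v v"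
    using A unfolding eigenvector_def by auto
  have Cvi: "(\<Sum>j<n. of_real (A $$ (i, j)) * v $ j) = z * v $ i" if i: "i < n" for i
  proof -
    have "(?C *\<^sub>v v) $ i = (\<Sum>j<n. of_real (A $$ (i, j)) * v $ j)"
      using i A v by (simp add: scalar_prod_def atLeast0LessThan)
    then show ?thesis using Cv i v by simp
  qed
  have symA: "A $$ (i, j) = A $$ (j, i)" if "i < n" "j < n" for i j
    using sym A that by (metis carrier_matD index_transpose_mat(1))
  define s where "s = (\<Sum>i<n. cnj (v $ i) * v $ i)"
  obtain k where k: "k < n" "v $ k \<noteq> 0"
    using v v0 by (metis eq_vecI carrier_vecD index_zero_vec)
  have s_real: "s = of_real (\<Sum>i<n. (cmod (v $ i))\<^sup>2)"
    unfolding s_def by (simp add: mult.commute[of "cnj _"] complex_mult_cnj cmod_power2)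
  have "0 < (cmod (v $ k))\<^sup>2" using k by simp
  also have "\<dots> \<le> (\<Sum>i<n. (cmod (v $ i))\<^sup>2)" using k by (intro member_le_sum) auto
  finally have "s \<noteq> 0" unfolding s_real by (metis of_real_eq_0_iff order_less_irrefl)
  \<comment> \<open>the Hermitian form \<open>v\<^sup>* C v\<close> equals both \<open>z s\<close> and \<open>cnj z s\<close>\<close>
  have "z * s = (\<Sum>i<n. cnj (v $ i) * (z * v $ i))"
    unfolding s_def by (simp add: sum_distrib_left ac_simps)
  also have "\<dots> = (\<Sum>i<n. \<Sum>j<n. cnj (v $ i) * of_real (A $$ (i, j)) * v $ j)"
    by (simp add: Cvi[symmetric] sum_distrib_left ac_simps)
  also have "\<dots> = (\<Sum>j<n. \<Sum>i<n. cnj (v $ i) * of_real (A $$ (j, i)) * v $ j)"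
    by (subst sum.swap) (simp add: symA)
  also have "\<dots> = (\<Sum>j<n. v $ j * cnj (\<Sum>i<n. of_real (A $$ (j, i)) * v $ i))"
    by (simp add: sum_distrib_left ac_simps)
  also have "\<dots> = (\<Sum>j<n. v $ j * cnj (z * v $ j))"
    by (simp add: Cvi)
  also have "\<dots> = cnj z * s"
    unfolding s_def by (simp add: sum_distrib_left ac_simps)
  finally show ?thesis using \<open>s \<noteq> 0\<close> by simp
qed

lemma symmetric_mat_has_eigenvalue:
  fixes A :: "real mat"
  assumes A: "A \<in> carrier_mat n n" and sym: "transpose_mat A = A" and n: "n > 0"
  shows "\<exists>e. eigenvalue A e"
proof -
  let ?C = "map_mat complex_of_real A"
  have C: "?C \<in> carrier_mat n n" using A by simp
  obtain z where z: "eigenvalue ?C z"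
    using spectrum_non_empty[OF C n] unfolding spectrum_def by auto
  then have "cnj z = z" by (rule eigenvalue_real_symmetric_is_real[OF A sym])
  then have zr: "z = of_real (Re z)" by (simp add: Reals_cnj_iff of_real_Re)
  have "of_real (poly (char_poly A) (Re z)) = poly (char_poly ?C) z"
    by (subst zr) (simp add: of_real_hom.char_poly_hom[OF A] of_real_hom.poly_map_poly)
  also have "\<dots> = 0" using z eigenvalue_root_char_poly[OF C] by simp
  finally show ?thesis using eigenvalue_root_char_poly[OF A] by auto
qed

lemma symmetric_mat_unit_eigenvector:
  fixes A :: "real mat"
  assumes A: "A \<in> carrier_mat n n" and sym: "transpose_mat A = A" and n: "n > 0"
  obtains e and v :: "real vec" where "v \<in> carrier_vec n" "v \<bullet> v = 1" "A *\<^sub>v v = e \<cdot>\<^sub>v v"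
proof -
  obtain e where e: "eigenvalue A e" using symmetric_mat_has_eigenvalue[OF A sym n] by blast
  define u where "u = find_eigenvector A e"
  have "eigenvector A u e" unfolding u_def by (rule find_eigenvector[OF A e])
  then have u: "u \<in> carrier_vec n" "u \<noteq> 0\<^sub>v n" and Au: "A *\<^sub>v u = e \<cdot>\<^sub>v u"
    using A unfolding eigenvector_def by auto
  have pos: "u \<bullet> u > 0" using conjugate_square_greater_0_vec[OF u(1)] u(2) by simp
  define v where "v = (1 / sqrt (u \<bullet> u)) \<cdot>\<^sub>v u"
  show thesis
  proof (rule that)
    show "v \<in> carrier_vec n" unfolding v_def using u by simp
    show "v \<bullet> v = 1" unfolding v_def using u pos
      by (simp add: smult_scalar_prod_distrib scalar_prod_smult_distrib field_simps)
    show "A *\<^sub>v v = e \<cdot>\<^sub>v v" unfolding v_def using A u Au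
      by (simp add: mult_mat_vec smult_smult_assoc mult.commute)
  qed
qed

lemma orthonormal_mat_with_first_col:
  fixes v :: "real vec"
  assumes v: "v \<in> carrier_vec n" and nv: "v \<bullet> v = 1"
  obtains W where "orthonormal_mat n W" "col W 0 = v"
proof -
  interpret cof_vec_space n "TYPE(real)" .
  have v0: "v \<noteq> 0\<^sub>v n" using nv v by auto
  then have n: "n \<noteq> 0" using v by (auto intro!: eq_vecI)
  define b where "b = basis_completion v"
  from basis_completion[OF v v0, folded b_def]
  have dist_b: "distinct b" and indep: "\<not> lin_dep (set b)" and b: "set b \<subseteq> carrier_vec n"
    and hdb: "hd b = v" and len_b: "length b = n" by auto
  from hdb len_b n obtain vs where bv: "b = v # vs" by (cases b) auto
  define ws where "ws = gram_schmidt n b"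
  from gram_schmidt_result[OF b dist_b indep ws_def]
  have ws: "set ws \<subseteq> carrier_vec n" "corthogonal ws" "length ws = n" by (auto simp: len_b)
  have hdws: "hd ws = v" using gram_schmidt_hd[OF v, of vs] unfolding ws_def bv .
  define us where "us = map (\<lambda>w. (1 / sqrt (w \<bullet> w)) \<cdot>\<^sub>v w) ws"
  have us: "set us \<subseteq> carrier_vec n" "length us = n" using ws unfolding us_def by auto
  have orth: "us ! i \<bullet> us ! j = (if i = j then 1 else 0)" if i: "i < n" and j: "j < n" for i j
  proof -
    have wi: "ws ! i \<in> carrier_vec n" and wj: "ws ! j \<in> carrier_vec n" using ws i j by auto
    have pos: "ws ! i \<bullet> ws ! i > 0"
      using corthogonalD[OF ws(2), of i i] ws i conjugate_square_ge_0_vec[of "ws ! i"] by auto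
    have "us ! i \<bullet> us ! j = 1 / sqrt (ws ! i \<bullet> ws ! i) * (1 / sqrt (ws ! j \<bullet> ws ! j)) * (ws ! i \<bullet> ws ! j)"
      unfolding us_def using i j ws wi wj by (simp add: smult_scalar_prod_distrib scalar_prod_smult_distrib)
    also have "\<dots> = (if i = j then 1 else 0)"
    proof (cases "i = j")
      case True
      then show ?thesis using pos by (simp add: field_simps)
    next
      case False
      then show ?thesis using corthogonalD[OF ws(2), of i j] ws i j by auto
    qed
    finally show ?thesis .
  qed
  define W where "W = mat_of_cols n us"
  have colW: "col W i = us ! i" if "i < n" for i
    unfolding W_def using that us by (intro col_mat_of_cols) auto
  show thesis
  proof (rule that)
    have W: "W \<in> carrier_mat n n" unfolding W_def using mat_of_cols_carrier(1)[of n us] us by simp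
    moreover have "transpose_mat W * W = 1\<^sub>m n"
      by (rule eq_matI) (use W in \<open>auto simp: colW orth\<close>)
    ultimately show "orthonormal_mat n W" by (rule orthonormal_matI)
    have "hd us = v" unfolding us_def using hdws ws n nv by (cases ws) auto
    then have "us ! 0 = v" using us n by (cases us) auto
    then show "col W 0 = v" using colW[of 0] n by simp
  qed
qed

lemma symmetric_mat_deflate:
  fixes A W :: "real mat"
  assumes A: "A \<in> carrier_mat (Suc m) (Suc m)" and sym: "transpose_mat A = A"
    and W: "orthonormal_mat (Suc m) W" and Av: "A *\<^sub>v col W 0 = e \<cdot>\<^sub>v col W 0"
  obtains A3 where "A3 \<in> carrier_mat m m" "transpose_mat A3 = A3"
    "transpose_mat W * A * W = four_block_mat (mat 1 1 (\<lambda>_. e)) (0\<^sub>m 1 m) (0\<^sub>m m 1) A3"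
proof -
  let ?n = "Suc m"
  have Wc: "W \<in> carrier_mat ?n ?n" and WtW: "transpose_mat W * W = 1\<^sub>m ?n"
    using W unfolding orthonormal_mat_def by auto
  define A' where "A' = transpose_mat W * A * W"
  have A': "A' \<in> carrier_mat ?n ?n" unfolding A'_def using Wc A by simp
  have symA': "transpose_mat A' = A'"
    unfolding A'_def using Wc A sym
    by (simp add: transpose_mult[of _ ?n ?n _ ?n] assoc_mult_mat[of _ ?n ?n _ ?n _ ?n])
  have A'col: "A' $$ (i, 0) = (if i = 0 then e else 0)" if i: "i < ?n" for i
  proof -
    have "A' = transpose_mat W * (A * W)"
      unfolding A'_def using Wc A by (simp add: assoc_mult_mat[of _ ?n ?n _ ?n _ ?n])
    then have "A' $$ (i, 0) = col W i \<bullet> (A *\<^sub>v col W 0)"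
      using i Wc A by (simp add: col_mult2 mult_mat_vec_def)
    also have "\<dots> = e * (col W i \<bullet> col W 0)"
      using i Wc by (simp add: Av)
    also have "col W i \<bullet> col W 0 = (transpose_mat W * W) $$ (i, 0)"
      using i Wc by simp
    finally show ?thesis using WtW i by simp
  qed
  have A'row: "A' $$ (0, j) = (if j = 0 then e else 0)" if j: "j < ?n" for j
    using A'col[OF j] symA' A' j by (metis carrier_matD index_transpose_mat(1) zero_less_Suc)
  define A3 where "A3 = mat m m (\<lambda>(i, j). A' $$ (Suc i, Suc j))"
  show thesis
  proof (rule that)
    show "A3 \<in> carrier_mat m m" unfolding A3_def by simp
    show "transpose_mat A3 = A3"
      unfolding A3_def using symA' A'
      by (intro eq_matI) (auto, metis Suc_less_eq carrier_matD index_transpose_mat(1))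
    show "transpose_mat W * A * W = four_block_mat (mat 1 1 (\<lambda>_. e)) (0\<^sub>m 1 m) (0\<^sub>m m 1) A3"
      unfolding A'_def[symmetric]
      by (rule eq_matI) (use A' A'col A'row in \<open>auto simp: A3_def\<close>)
  qed
qed

lemma orthonormal_mat_conj:
  assumes W: "orthonormal_mat n W" and A: "A \<in> carrier_mat n n"
    and P: "P \<in> carrier_mat n n" and D: "D \<in> carrier_mat n n"
    and WAW: "transpose_mat W * A * W = P * D * transpose_mat P"
  shows "A = (W * P) * D * transpose_mat (W * P)"
proof -
  have Wc: "W \<in> carrier_mat n n" and WWt: "W * transpose_mat W = 1\<^sub>m n"
    using W unfolding orthonormal_mat_def by auto
  have WPt: "transpose_mat (W * P) = transpose_mat P * transpose_mat W"
    using Wc P by (simp add: transpose_mult)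
  have "(W * P) * D * transpose_mat (W * P) = W * (P * D * transpose_mat P) * transpose_mat W"
    unfolding WPt using Wc P D by (simp add: assoc_mult_mat[of _ n n _ n _ n])
  also have "\<dots> = (W * transpose_mat W) * A * (W * transpose_mat W)"
    unfolding WAW[symmetric] using Wc A by (simp add: assoc_mult_mat[of _ n n _ n _ n])
  also have "\<dots> = A" using WWt A by simp
  finally show ?thesis ..
qed

lemma symmetric_mat_orthonormal_diagonalization:
  fixes A :: "real mat"
  assumes "A \<in> carrier_mat n n" and "transpose_mat A = A"
  shows "\<exists>P D. orthonormal_mat n P \<and> D \<in> carrier_mat n n \<and> diagonal_mat D \<and>
    A = P * D * transpose_mat P"
  using assms
proof (induction n arbitrary: A)
  case 0
  then show ?case
    by (intro exI[of _ "1\<^sub>m 0"] exI[of _ A]) (auto simp: orthonormal_mat_def diagonal_mat_def)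
next
  case (Suc m A)
  define n where "n = Suc m"
  have A: "A \<in> carrier_mat n n" and sym: "transpose_mat A = A" using Suc n_def by auto
  have "0 < n" unfolding n_def by simp
  then obtain e and v :: "real vec" where v: "v \<in> carrier_vec n" "v \<bullet> v = 1"
    and Av: "A *\<^sub>v v = e \<cdot>\<^sub>v v"
    by (rule symmetric_mat_unit_eigenvector[OF A sym])
  obtain W where W: "orthonormal_mat n W" and W0: "col W 0 = v"
    using orthonormal_mat_with_first_col[OF v] .
  have "A *\<^sub>v col W 0 = e \<cdot>\<^sub>v col W 0" using Av W0 by simp
  then obtain A3 where A3: "A3 \<in> carrier_mat m m" "transpose_mat A3 = A3"
    and WAW: "transpose_mat W * A * W = four_block_mat (mat 1 1 (\<lambda>_. e)) (0\<^sub>m 1 m) (0\<^sub>m m 1) A3"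
    by (rule symmetric_mat_deflate[OF Suc.prems W[unfolded n_def]])
  define E1 :: "real mat" where "E1 = mat 1 1 (\<lambda>_. e)"
  obtain P3 D3 where P3: "orthonormal_mat m P3" and D3: "D3 \<in> carrier_mat m m" "diagonal_mat D3"
    and A3eq: "A3 = P3 * D3 * transpose_mat P3"
    using Suc.IH[OF A3] by blast
  have P3c: "P3 \<in> carrier_mat m m" using P3 unfolding orthonormal_mat_def by simp
  define P1 where "P1 = four_block_mat (1\<^sub>m 1) (0\<^sub>m 1 m) (0\<^sub>m m 1) P3"
  define D where "D = four_block_mat E1 (0\<^sub>m 1 m) (0\<^sub>m m 1) D3"
  have E1: "E1 \<in> carrier_mat 1 1" unfolding E1_def by simp
  have P1: "orthonormal_mat n P1" unfolding P1_def n_def by (rule orthonormal_mat_four_block[OF P3])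
  have Dc: "D \<in> carrier_mat n n" unfolding D_def n_def using four_block_carrier_mat[OF E1 D3(1)] by simp
  have P1t: "transpose_mat P1 = four_block_mat (1\<^sub>m 1) (0\<^sub>m 1 m) (0\<^sub>m m 1) (transpose_mat P3)"
    unfolding P1_def using transpose_four_block_mat_diag[OF one_carrier_mat P3c] by simp
  have PD: "P1 * D = four_block_mat (1\<^sub>m 1 * E1) (0\<^sub>m 1 m) (0\<^sub>m m 1) (P3 * D3)"
    unfolding P1_def D_def by (rule mult_four_block_mat_diag[OF one_carrier_mat E1 P3c D3(1)])
  have "P1 * D * transpose_mat P1
      = four_block_mat (1\<^sub>m 1 * E1 * 1\<^sub>m 1) (0\<^sub>m 1 m) (0\<^sub>m m 1) (P3 * D3 * transpose_mat P3)"
    unfolding PD P1t by (rule mult_four_block_mat_diag) (use E1 P3c D3 in auto)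
  also have "\<dots> = transpose_mat W * A * W" unfolding WAW A3eq E1_def by simp
  finally have "transpose_mat W * A * W = P1 * D * transpose_mat P1" ..
  then have "A = (W * P1) * D * transpose_mat (W * P1)"
    using P1 unfolding orthonormal_mat_def by (intro orthonormal_mat_conj[OF W A _ Dc]) auto
  moreover have "diagonal_mat D"
    using D3 unfolding diagonal_mat_def D_def E1_def by auto
  ultimately have "\<exists>P D. orthonormal_mat n P \<and> D \<in> carrier_mat n n \<and> diagonal_mat D \<and>
      A = P * D * transpose_mat P"
    using orthonormal_mat_mult[OF W P1] Dc by blast
  then show ?case unfolding n_def .
qed

lemma proots_prod_linear_factors: "proots (\<Prod>a\<leftarrow>as. [:- a, 1:]) = mset (as :: 'a :: idom list)"
proof (induction as)
  case (Cons a as)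
  have "(\<Prod>a\<leftarrow>as. [:- a, 1:]) \<noteq> 0" by (auto simp: prod_list_zero_iff)
  then have "proots ([:- a, 1:] * (\<Prod>a\<leftarrow>as. [:- a, 1:])) = proots [:- a, 1:] + proots (\<Prod>a\<leftarrow>as. [:- a, 1:])"
    by (intro proots_mult) auto
  then show ?case using Cons by (simp only: list.map prod_list.Cons proots_linear_factor) simp
qed simp

text \<open>\<open>\<phi> i\<close> is a unit eigenvector of the kernel \<open>a\<close> for the eigenvalue \<open>\<nu> i\<close>; the two
  orthonormality relations say that the matrix \<open>(\<phi> i v)\<close> is orthogonal.\<close>
definition spectral_decomposition ::
    "nat \<Rightarrow> (nat \<Rightarrow> nat \<Rightarrow> real) \<Rightarrow> (nat \<Rightarrow> real) \<Rightarrow> (nat \<Rightarrow> nat \<Rightarrow> real) \<Rightarrow> bool" where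
  "spectral_decomposition n a \<nu> \<phi> \<longleftrightarrow>
     (\<forall>v<n. \<forall>w<n. a v w = (\<Sum>i<n. \<nu> i * \<phi> i v * \<phi> i w)) \<and>
     (\<forall>i<n. \<forall>j<n. (\<Sum>v<n. \<phi> i v * \<phi> j v) = (if i = j then 1 else 0)) \<and>
     (\<forall>v<n. \<forall>w<n. (\<Sum>i<n. \<phi> i v * \<phi> i w) = (if v = w then 1 else 0))"

lemma symmetric_mat_spectral_decomposition:
  fixes A :: "real mat"
  assumes A: "A \<in> carrier_mat n n" and sym: "transpose_mat A = A"
  obtains \<nu> \<phi> where "mset (map \<nu> [0..<n]) = proots (char_poly A)"
    "spectral_decomposition n (\<lambda>v w. A $$ (v, w)) \<nu> \<phi>"
proof -
  obtain P D where P: "orthonormal_mat n P" and D: "D \<in> carrier_mat n n" "diagonal_mat D"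
    and AP: "A = P * D * transpose_mat P"
    using symmetric_mat_orthonormal_diagonalization[OF A sym] by blast
  have Pc: "P \<in> carrier_mat n n" and PtP: "transpose_mat P * P = 1\<^sub>m n"
    and PPt: "P * transpose_mat P = 1\<^sub>m n" using P unfolding orthonormal_mat_def by auto
  define \<nu> where "\<nu> i = D $$ (i, i)" for i
  define \<phi> where "\<phi> i v = P $$ (v, i)" for i v
  have "similar_mat A D"
    by (rule similar_matI[of A D P "transpose_mat P" n]) (use A Pc D PtP PPt AP in auto)
  then have "char_poly A = char_poly D" by (rule char_poly_similar)
  also have "\<dots> = (\<Prod>a\<leftarrow>diag_mat D. [:- a, 1:])"
    by (rule char_poly_upper_triangular[OF D(1)])
      (use D in \<open>auto simp: diagonal_mat_def upper_triangular_def\<close>)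
  also have "diag_mat D = map \<nu> [0..<n]" unfolding diag_mat_def \<nu>_def using D by simp
  finally have cp: "mset (map \<nu> [0..<n]) = proots (char_poly A)"
    by (simp only: proots_prod_linear_factors)
  have "A $$ (v, w) = (\<Sum>i<n. \<nu> i * \<phi> i v * \<phi> i w)" if "v < n" "w < n" for v w
  proof -
    have "A $$ (v, w) = (\<Sum>i<n. P $$ (v, i) * (\<Sum>k<n. D $$ (i, k) * P $$ (w, k)))"
      unfolding AP using Pc D that by (simp add: scalar_prod_def atLeast0LessThan)
    also have "\<dots> = (\<Sum>i<n. \<nu> i * \<phi> i v * \<phi> i w)"
    proof (rule sum.cong[OF refl])
      fix i assume i: "i \<in> {..<n}"
      have "(\<Sum>k<n. D $$ (i, k) * P $$ (w, k)) = (\<Sum>k<n. if k = i then D $$ (i, i) * P $$ (w, i) else 0)"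
        using D i unfolding diagonal_mat_def by (intro sum.cong) auto
      then show "P $$ (v, i) * (\<Sum>k<n. D $$ (i, k) * P $$ (w, k)) = \<nu> i * \<phi> i v * \<phi> i w"
        using i unfolding \<nu>_def \<phi>_def by simp
    qed
    finally show ?thesis .
  qed
  moreover have "(\<Sum>v<n. \<phi> i v * \<phi> j v) = (transpose_mat P * P) $$ (i, j)" if "i < n" "j < n" for i j
    unfolding \<phi>_def using Pc that by (simp add: scalar_prod_def atLeast0LessThan)
  moreover have "(\<Sum>i<n. \<phi> i v * \<phi> i w) = (P * transpose_mat P) $$ (v, w)" if "v < n" "w < n" for v w
    unfolding \<phi>_def using Pc that by (simp add: scalar_prod_def atLeast0LessThan)
  ultimately have "spectral_decomposition n (\<lambda>v w. A $$ (v, w)) \<nu> \<phi>"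
    unfolding spectral_decomposition_def PtP PPt by simp
  with cp show thesis by (rule that)
qed

lemma spectral_decomposition_permute:
  assumes sd: "spectral_decomposition n a \<nu> \<phi>" and p: "p permutes {..<n}"
  shows "spectral_decomposition n a (\<nu> \<circ> p) (\<phi> \<circ> p)"
proof -
  have reindex: "(\<Sum>i<n. f (p i)) = (\<Sum>i<n. f i)" for f :: "nat \<Rightarrow> real"
    using sum.permute[OF p, of f] by (simp add: comp_def)
  have "p i < n" if "i < n" for i using permutes_in_image[OF p] that by simp
  moreover have "p i = p j \<longleftrightarrow> i = j" for i j using permutes_inj[OF p] by (meson injD)
  ultimately show ?thesis
    using sd unfolding spectral_decomposition_def comp_def
    by (simp add: reindex[of "\<lambda>i. \<nu> i * \<phi> i _ * \<phi> i _"] reindex[of "\<lambda>i. \<phi> i _ * \<phi> i _"])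
qed

lemma adj_mat_spectral_decomposition:
  assumes "simple_graph_on n E"
  obtains \<phi> where
    "spectral_decomposition n (\<lambda>v w. if E v w then 1 else 0) (\<lambda>i. adj_eigenvalues n E ! i) \<phi>"
proof -
  define A where "A = adj_mat n E"
  have A: "A \<in> carrier_mat n n" unfolding A_def adj_mat_def by simp
  have "transpose_mat A = A"
    unfolding A_def adj_mat_def using assms unfolding simple_graph_on_def by (intro eq_matI) auto
  then obtain \<mu> \<phi> where cp: "mset (map \<mu> [0..<n]) = proots (char_poly A)"
    and sd: "spectral_decomposition n (\<lambda>v w. A $$ (v, w)) \<mu> \<phi>"
    using symmetric_mat_spectral_decomposition[OF A] by blast
  define L where "L = adj_eigenvalues n E"
  have "mset L = mset (map \<mu> [0..<n])"
    unfolding L_def adj_eigenvalues_def A_def[symmetric] cp[symmetric] by simp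
  then obtain p where p: "p permutes {..<length (map \<mu> [0..<n])}"
    and pl: "permute_list p (map \<mu> [0..<n]) = L"
    by (rule mset_eq_permutation)
  have p': "p permutes {..<n}" using p by simp
  have L: "L ! i = (\<mu> \<circ> p) i" if "i < n" for i
    unfolding pl[symmetric] using permute_list_nth[OF p] that permutes_in_image[OF p'] by simp
  have "spectral_decomposition n (\<lambda>v w. if E v w then 1 else 0) (\<mu> \<circ> p) (\<phi> \<circ> p)"
    using spectral_decomposition_permute[OF sd p'] unfolding A_def adj_mat_def
    by (simp add: spectral_decomposition_def)
  then have "spectral_decomposition n (\<lambda>v w. if E v w then 1 else 0) (\<lambda>i. L ! i) (\<phi> \<circ> p)"
    unfolding spectral_decomposition_def by (simp add: L)
  then show thesis unfolding L_def by (rule that)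
qed

definition eigen_coeff :: "nat \<Rightarrow> (nat \<Rightarrow> nat \<Rightarrow> real) \<Rightarrow> (nat \<Rightarrow> real) \<Rightarrow> nat \<Rightarrow> real" where
  "eigen_coeff n \<phi> x i = (\<Sum>v<n. \<phi> i v * x v)"

lemma spectral_decomposition_parseval:
  assumes "spectral_decomposition n a \<nu> \<phi>"
  shows "(\<Sum>i<n. eigen_coeff n \<phi> x i * eigen_coeff n \<phi> y i) = (\<Sum>v<n. x v * y v)"
proof -
  have comp: "(\<Sum>i<n. \<phi> i v * \<phi> i w) = (if v = w then 1 else 0)" if "v < n" "w < n" for v w
    using assms that unfolding spectral_decomposition_def by blast
  have "(\<Sum>i<n. eigen_coeff n \<phi> x i * eigen_coeff n \<phi> y i)
      = (\<Sum>i<n. \<Sum>v<n. \<Sum>w<n. \<phi> i v * x v * (\<phi> i w * y w))"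
    unfolding eigen_coeff_def by (simp add: sum_product)
  also have "\<dots> = (\<Sum>v<n. \<Sum>i<n. \<Sum>w<n. \<phi> i v * x v * (\<phi> i w * y w))"
    by (rule sum.swap)
  also have "\<dots> = (\<Sum>v<n. \<Sum>w<n. \<Sum>i<n. \<phi> i v * x v * (\<phi> i w * y w))"
    by (rule sum.cong[OF refl], rule sum.swap)
  also have "\<dots> = (\<Sum>v<n. \<Sum>w<n. x v * y w * (\<Sum>i<n. \<phi> i v * \<phi> i w))"
    by (simp add: sum_distrib_left ac_simps)
  also have "\<dots> = (\<Sum>v<n. x v * y v)"
    by (simp add: comp if_distrib cong: if_cong)
  finally show ?thesis .
qed

lemma spectral_decomposition_bilinear:
  assumes "spectral_decomposition n a \<nu> \<phi>"
  shows "(\<Sum>v<n. \<Sum>w<n. a v w * x v * y w)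
     = (\<Sum>i<n. \<nu> i * eigen_coeff n \<phi> x i * eigen_coeff n \<phi> y i)"
proof -
  have "(\<Sum>v<n. \<Sum>w<n. a v w * x v * y w)
      = (\<Sum>v<n. \<Sum>w<n. \<Sum>i<n. \<nu> i * (\<phi> i v * x v) * (\<phi> i w * y w))"
    using assms unfolding spectral_decomposition_def
    by (intro sum.cong) (auto simp: sum_distrib_left sum_distrib_right mult_ac)
  also have "\<dots> = (\<Sum>v<n. \<Sum>i<n. \<Sum>w<n. \<nu> i * (\<phi> i v * x v) * (\<phi> i w * y w))"
    by (rule sum.cong[OF refl], rule sum.swap)
  also have "\<dots> = (\<Sum>i<n. \<Sum>v<n. \<Sum>w<n. \<nu> i * (\<phi> i v * x v) * (\<phi> i w * y w))"
    by (rule sum.swap)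
  also have "\<dots> = (\<Sum>i<n. \<nu> i * eigen_coeff n \<phi> x i * eigen_coeff n \<phi> y i)"
    unfolding eigen_coeff_def by (simp add: sum_distrib_left sum_distrib_right ac_simps)
  finally show ?thesis .
qed

lemma spectral_decomposition_eigen_coeff_mult:
  assumes "spectral_decomposition n a \<nu> \<phi>" and i: "i < n"
  shows "eigen_coeff n \<phi> (\<lambda>v. \<Sum>w<n. a v w * x w) i = \<nu> i * eigen_coeff n \<phi> x i"
proof -
  have orth: "(\<Sum>v<n. \<phi> i v * \<phi> j v) = (if i = j then 1 else 0)" if "j < n" for j
    using assms that unfolding spectral_decomposition_def by blast
  have "eigen_coeff n \<phi> (\<lambda>v. \<Sum>w<n. a v w * x w) i
      = (\<Sum>v<n. \<Sum>w<n. \<Sum>j<n. \<phi> i v * (\<nu> j * \<phi> j v * \<phi> j w * x w))"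
    using assms unfolding eigen_coeff_def spectral_decomposition_def
    by (intro sum.cong) (auto simp: sum_distrib_left sum_distrib_right)
  also have "\<dots> = (\<Sum>w<n. \<Sum>v<n. \<Sum>j<n. \<phi> i v * (\<nu> j * \<phi> j v * \<phi> j w * x w))"
    by (rule sum.swap)
  also have "\<dots> = (\<Sum>w<n. \<Sum>j<n. \<Sum>v<n. \<phi> i v * (\<nu> j * \<phi> j v * \<phi> j w * x w))"
    by (rule sum.cong[OF refl], rule sum.swap)
  also have "\<dots> = (\<Sum>w<n. \<Sum>j<n. \<nu> j * \<phi> j w * x w * (\<Sum>v<n. \<phi> i v * \<phi> j v))"
    by (simp add: sum_distrib_left ac_simps)
  also have "\<dots> = (\<Sum>w<n. \<Sum>j<n. if j = i then \<nu> i * \<phi> i w * x w else 0)"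
    by (intro sum.cong refl) (auto simp: orth)
  also have "\<dots> = \<nu> i * eigen_coeff n \<phi> x i"
    unfolding eigen_coeff_def using i by (simp add: sum_distrib_left ac_simps)
  finally show ?thesis .
qed










lemma L2_set_abs: "L2_set (\<lambda>i. \<bar>f i\<bar>) A = L2_set f A"
  unfolding L2_set_def by simp

lemma L2_set_scale: "L2_set (\<lambda>i. c * f i) A = \<bar>c\<bar> * L2_set f A"
  unfolding L2_set_def by (simp add: power_mult_distrib real_sqrt_mult flip: sum_distrib_left)

lemma L2_set_subset: "finite B \<Longrightarrow> A \<subseteq> B \<Longrightarrow> L2_set f A \<le> L2_set f B"
  unfolding L2_set_def by (intro real_sqrt_le_mono sum_mono2) auto

lemma L2_set_lessThan_split:
  fixes n :: nat
  assumes "1 \<le> n"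
  shows "L2_set f {..<n} = sqrt ((f 0)\<^sup>2 + (L2_set f {1..<n})\<^sup>2)"
proof -
  have "{..<n} = insert 0 {1..<n}" using assms by (auto simp: Suc_le_eq)
  then show ?thesis by (simp add: L2_set_insert)
qed

lemma abs_sum_mult_le_L2_set: "\<bar>\<Sum>i\<in>A. f i * g i\<bar> \<le> L2_set f A * L2_set g A"
  using sum_abs[of "\<lambda>i. f i * g i" A] L2_set_mult_ineq[of f g A] by (simp add: abs_mult)

lemma L2_set_orthogonal_projection:
  fixes t \<alpha> :: "'a \<Rightarrow> real"
  assumes "finite A" and t: "L2_set t A = 1"
  defines "\<tau> \<equiv> \<Sum>j\<in>A. t j * \<alpha> j"
  shows "(\<Sum>i\<in>A. t i * (\<alpha> i - \<tau> * t i)) = 0"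
    and "L2_set (\<lambda>i. \<alpha> i - \<tau> * t i) A \<le> L2_set \<alpha> A"
proof -
  have tt: "(\<Sum>i\<in>A. (t i)\<^sup>2) = 1"
    using t unfolding L2_set_def by (metis real_sqrt_eq_1_iff)
  have "(\<Sum>i\<in>A. t i * (\<alpha> i - \<tau> * t i)) = (\<Sum>i\<in>A. t i * \<alpha> i) - \<tau> * (\<Sum>i\<in>A. (t i)\<^sup>2)"
    by (simp add: sum_subtractf sum_distrib_left algebra_simps power2_eq_square)
  then show "(\<Sum>i\<in>A. t i * (\<alpha> i - \<tau> * t i)) = 0"
    using tt unfolding \<tau>_def by simp
  \<comment> \<open>Pythagoras: \<open>\<parallel>\<alpha> - \<tau> t\<parallel>\<^sup>2 = \<parallel>\<alpha>\<parallel>\<^sup>2 - \<tau>\<^sup>2\<close>\<close>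
  have "(\<Sum>i\<in>A. (\<alpha> i - \<tau> * t i)\<^sup>2)
      = (\<Sum>i\<in>A. (\<alpha> i)\<^sup>2) - 2 * \<tau> * (\<Sum>i\<in>A. t i * \<alpha> i) + \<tau>\<^sup>2 * (\<Sum>i\<in>A. (t i)\<^sup>2)"
    by (simp add: power2_diff sum.distrib sum_subtractf sum_distrib_left algebra_simps power2_eq_square)
  also have "\<dots> = (\<Sum>i\<in>A. (\<alpha> i)\<^sup>2) - \<tau>\<^sup>2"
    using tt unfolding \<tau>_def[symmetric] by (simp add: power2_eq_square)
  finally have "(\<Sum>i\<in>A. (\<alpha> i - \<tau> * t i)\<^sup>2) = (\<Sum>i\<in>A. (\<alpha> i)\<^sup>2) - \<tau>\<^sup>2" .
  then show "L2_set (\<lambda>i. \<alpha> i - \<tau> * t i) A \<le> L2_set \<alpha> A"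
    unfolding L2_set_def by (intro real_sqrt_le_mono) simp
qed

lemma first_coeff_orthogonal_bound:
  fixes n :: nat
  assumes "1 \<le> n" and "(\<Sum>i<n. t i * z i) = 0"
  shows "\<bar>t 0\<bar> * \<bar>z 0\<bar> \<le> L2_set t {1..<n} * L2_set z {1..<n}"
proof -
  have "{..<n} = insert 0 {1..<n}" using assms(1) by (cases n) auto
  then have "t 0 * z 0 = - (\<Sum>i\<in>{1..<n}. t i * z i)" using assms(2) by simp
  then show ?thesis using abs_sum_mult_le_L2_set[of t z "{1..<n}"] by (simp add: abs_mult)
qed

text \<open>The spectral data of a nearly regular graph in an orthonormal eigenbasis: \<open>\<nu>\<close> are the
  eigenvalues, \<open>t\<close> the coefficients of the normalised all-ones vector, and
  \<open>(\<nu> i - d) * t i\<close> the coefficients of the normalised degree deviation vector.\<close>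
locale near_regular_spectrum =
  fixes n :: nat and \<nu> t :: "nat \<Rightarrow> real" and d lam R :: real
  assumes n: "1 \<le> n"
    and eig: "\<And>i. 1 \<le> i \<Longrightarrow> i < n \<Longrightarrow> \<bar>\<nu> i\<bar> \<le> lam"
    and unit: "L2_set t {..<n} = 1"
    and deviation: "L2_set (\<lambda>i. (\<nu> i - d) * t i) {..<n} \<le> R * lam"
    and lam: "0 \<le> lam" and d: "0 < d" and lam_small: "2 * lam \<le> d" and R_lam_small: "8 * (R * lam) \<le> d"
begin

abbreviation tail :: real where "tail \<equiv> L2_set t {1..<n}"

lemma R_lam_nonneg: "0 \<le> R * lam"
  using deviation L2_set_nonneg[of _ "{..<n}"] by (rule order_trans[rotated])

text \<open>Away from the top eigenvalue \<open>\<nu> i - d\<close> is at least \<open>d / 2\<close> in absolute value, so the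
  all-ones vector is concentrated on the top eigenvector.\<close>
lemma tail_bound: "d * tail \<le> 2 * (R * lam)"
proof -
  have "d / 2 * tail = L2_set (\<lambda>i. \<bar>d / 2 * t i\<bar>) {1..<n}"
    unfolding L2_set_abs L2_set_scale using d by simp
  also have "\<dots> \<le> L2_set (\<lambda>i. \<bar>(\<nu> i - d) * t i\<bar>) {1..<n}"
  proof (rule L2_set_mono)
    fix i assume "i \<in> {1..<n}"
    then have "d / 2 \<le> \<bar>\<nu> i - d\<bar>" using eig[of i] lam_small by auto
    then have "d / 2 * \<bar>t i\<bar> \<le> \<bar>\<nu> i - d\<bar> * \<bar>t i\<bar>" by (rule mult_right_mono) simp
    then show "\<bar>d / 2 * t i\<bar> \<le> \<bar>(\<nu> i - d) * t i\<bar>"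
      using d by (simp add: abs_mult)
  qed simp
  also have "\<dots> \<le> L2_set (\<lambda>i. (\<nu> i - d) * t i) {..<n}"
    unfolding L2_set_abs by (rule L2_set_subset) auto
  finally show ?thesis using deviation by simp
qed

lemma tail_le: "tail \<le> 1 / 4"
proof (rule mult_left_le_imp_le)
  show "d * tail \<le> d * (1 / 4)" using tail_bound R_lam_small by linarith
qed (use d in simp)

lemma top_coeff: "1 / 2 \<le> \<bar>t 0\<bar>"
proof -
  have "1 = (t 0)\<^sup>2 + tail\<^sup>2"
    using unit L2_set_lessThan_split[OF n, of t] by simp
  moreover have "tail\<^sup>2 \<le> (1 / 4)\<^sup>2" using tail_le by (intro power_mono) auto
  ultimately have "(1 / 2)\<^sup>2 \<le> \<bar>t 0\<bar>\<^sup>2" by (simp add: power2_eq_square)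
  then show ?thesis by (rule power2_le_imp_le) simp
qed

lemma top_eigenvalue: "\<bar>\<nu> 0\<bar> \<le> d + 2 * (R * lam)"
proof -
  have "\<bar>\<nu> 0 - d\<bar> * \<bar>t 0\<bar> \<le> L2_set (\<lambda>i. \<bar>(\<nu> i - d) * t i\<bar>) {..<n}"
    using member_le_L2_set[of "{..<n}" 0 "\<lambda>i. \<bar>(\<nu> i - d) * t i\<bar>"] n by (simp add: abs_mult)
  also have "\<dots> \<le> R * lam" using deviation by (simp add: L2_set_abs)
  finally have "\<bar>\<nu> 0 - d\<bar> * \<bar>t 0\<bar> \<le> R * lam" .
  moreover have "\<bar>\<nu> 0 - d\<bar> * (1 / 2) \<le> \<bar>\<nu> 0 - d\<bar> * \<bar>t 0\<bar>"
    using top_coeff by (intro mult_left_mono) auto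
  ultimately have "\<bar>\<nu> 0 - d\<bar> * (1 / 2) \<le> R * lam" by (rule order_trans[rotated])
  then have "\<bar>\<nu> 0 - d\<bar> \<le> 2 * (R * lam)" by simp
  moreover have "\<bar>\<nu> 0\<bar> \<le> \<bar>\<nu> 0 - d\<bar> + d"
    using abs_triangle_ineq[of "\<nu> 0 - d" d] d by simp
  ultimately show ?thesis by linarith
qed

text \<open>The matrix \<open>diag \<nu> - d t t\<^sup>T\<close>, i.e. the adjacency matrix minus \<open>d/n\<close> times the all-ones
  matrix, has operator norm at most \<open>(6R + 1) lam\<close>. Split \<open>\<alpha>\<close> along \<open>t\<close>: the component along
  \<open>t\<close> is mapped to the degree deviation vector, and the orthogonal component \<open>\<alpha>'\<close> has a small
  top coefficient.\<close>
lemma operator_bound: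
  "L2_set (\<lambda>i. \<nu> i * \<alpha> i - d * (\<Sum>j<n. t j * \<alpha> j) * t i) {..<n} \<le> (6 * R + 1) * lam * L2_set \<alpha> {..<n}"
proof -
  define \<tau> where "\<tau> = (\<Sum>j<n. t j * \<alpha> j)"
  define \<alpha>' where "\<alpha>' i = \<alpha> i - \<tau> * t i" for i
  define N where "N = L2_set \<alpha> {..<n}"
  have \<alpha>'_orth: "(\<Sum>i<n. t i * \<alpha>' i) = 0" and \<alpha>'_le: "L2_set \<alpha>' {..<n} \<le> N"
    using L2_set_orthogonal_projection[OF _ unit, of \<alpha>] unfolding \<alpha>'_def \<tau>_def N_def by auto
  have "L2_set \<alpha>' {1..<n} \<le> L2_set \<alpha>' {..<n}" by (rule L2_set_subset) auto
  with \<alpha>'_le have \<alpha>'_tail: "L2_set \<alpha>' {1..<n} \<le> N" by simp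
  have \<tau>: "\<bar>\<tau>\<bar> \<le> N" using abs_sum_mult_le_L2_set[of t \<alpha> "{..<n}"] unit unfolding \<tau>_def N_def by simp
  have "1 / 2 * \<bar>\<alpha>' 0\<bar> \<le> \<bar>t 0\<bar> * \<bar>\<alpha>' 0\<bar>"
    using top_coeff by (intro mult_right_mono) auto
  also have "\<dots> \<le> tail * L2_set \<alpha>' {1..<n}"
    by (rule first_coeff_orthogonal_bound[OF n \<alpha>'_orth])
  also have "\<dots> \<le> tail * N" using \<alpha>'_tail by (intro mult_left_mono) auto
  finally have \<alpha>'0: "\<bar>\<alpha>' 0\<bar> \<le> 2 * tail * N" by simp
  have "\<bar>\<nu> 0 * \<alpha>' 0\<bar> \<le> (d + 2 * (R * lam)) * (2 * tail * N)"
    unfolding abs_mult using top_eigenvalue \<alpha>'0 by (intro mult_mono) auto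
  also have "\<dots> = 2 * (d * tail) * N + 4 * (R * lam) * tail * N" by (simp add: algebra_simps)
  also have "\<dots> \<le> 2 * (2 * (R * lam)) * N + 4 * (R * lam) * (1 / 4) * N"
    using tail_bound tail_le R_lam_nonneg L2_set_nonneg[of \<alpha> "{..<n}"] unfolding N_def
    by (intro add_mono mult_right_mono mult_left_mono) auto
  finally have top: "\<bar>\<nu> 0 * \<alpha>' 0\<bar> \<le> 5 * (R * lam) * N" by (simp add: algebra_simps)
  have rest: "L2_set (\<lambda>i. \<nu> i * \<alpha>' i) {1..<n} \<le> lam * N"
  proof -
    have "L2_set (\<lambda>i. \<nu> i * \<alpha>' i) {1..<n} \<le> L2_set (\<lambda>i. lam * \<bar>\<alpha>' i\<bar>) {1..<n}"
      unfolding L2_set_abs[of "\<lambda>i. \<nu> i * \<alpha>' i", symmetric]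
      using eig by (intro L2_set_mono) (auto simp: abs_mult mult_right_mono)
    also have "\<dots> \<le> lam * N"
      using \<alpha>'_tail lam by (simp add: L2_set_scale L2_set_abs mult_left_mono)
    finally show ?thesis .
  qed
  have "L2_set (\<lambda>i. \<nu> i * \<alpha> i - d * \<tau> * t i) {..<n}
      = L2_set (\<lambda>i. \<tau> * ((\<nu> i - d) * t i) + \<nu> i * \<alpha>' i) {..<n}"
    unfolding \<alpha>'_def by (simp add: algebra_simps)
  also have "\<dots> \<le> L2_set (\<lambda>i. \<tau> * ((\<nu> i - d) * t i)) {..<n} + L2_set (\<lambda>i. \<nu> i * \<alpha>' i) {..<n}"
    by (rule L2_set_triangle_ineq)
  also have "L2_set (\<lambda>i. \<tau> * ((\<nu> i - d) * t i)) {..<n} \<le> N * (R * lam)"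
    unfolding L2_set_scale using \<tau> deviation R_lam_nonneg by (intro mult_mono) auto
  also have "L2_set (\<lambda>i. \<nu> i * \<alpha>' i) {..<n} \<le> \<bar>\<nu> 0 * \<alpha>' 0\<bar> + L2_set (\<lambda>i. \<nu> i * \<alpha>' i) {1..<n}"
    unfolding L2_set_lessThan_split[OF n] by (rule order_trans[OF sqrt_sum_squares_le_sum_abs]) simp
  finally show ?thesis
    using top rest unfolding \<tau>_def N_def by (simp add: algebra_simps)
qed

lemma bilinear_bound:
  "\<bar>(\<Sum>i<n. \<nu> i * \<alpha> i * \<beta> i) - d * (\<Sum>i<n. t i * \<alpha> i) * (\<Sum>i<n. t i * \<beta> i)\<bar>
     \<le> (6 * R + 1) * lam * L2_set \<alpha> {..<n} * L2_set \<beta> {..<n}"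
proof -
  define \<tau> where "\<tau> = (\<Sum>j<n. t j * \<alpha> j)"
  have "(\<Sum>i<n. \<nu> i * \<alpha> i * \<beta> i) - d * \<tau> * (\<Sum>i<n. t i * \<beta> i)
      = (\<Sum>i<n. (\<nu> i * \<alpha> i - d * \<tau> * t i) * \<beta> i)"
    by (simp add: algebra_simps sum_subtractf sum_distrib_left)
  then have "\<bar>(\<Sum>i<n. \<nu> i * \<alpha> i * \<beta> i) - d * \<tau> * (\<Sum>i<n. t i * \<beta> i)\<bar>
      \<le> L2_set (\<lambda>i. \<nu> i * \<alpha> i - d * \<tau> * t i) {..<n} * L2_set \<beta> {..<n}"
    using abs_sum_mult_le_L2_set by metis
  also have "\<dots> \<le> (6 * R + 1) * lam * L2_set \<alpha> {..<n} * L2_set \<beta> {..<n}"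
    using operator_bound[of \<alpha>] unfolding \<tau>_def by (intro mult_right_mono) auto
  finally show ?thesis unfolding \<tau>_def .
qed

end

lemma spectral_decomposition_L2_set:
  assumes "spectral_decomposition n a \<nu> \<phi>"
  shows "L2_set (eigen_coeff n \<phi> z) {..<n} = L2_set z {..<n}"
  unfolding L2_set_def using spectral_decomposition_parseval[OF assms, of z z]
  by (simp add: power2_eq_square)

lemma spectral_decomposition_degree_deviation:
  assumes sd: "spectral_decomposition n a \<nu> \<phi>" and n: "1 \<le> n"
    and rows: "\<And>v. v < n \<Longrightarrow> \<bar>(\<Sum>w<n. a v w) - d\<bar> \<le> r"
  shows "L2_set (\<lambda>i. (\<nu> i - d) * eigen_coeff n \<phi> (\<lambda>_. 1 / sqrt (real n)) i) {..<n} \<le> r"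
proof -
  define u :: "nat \<Rightarrow> real" where "u v = 1 / sqrt (real n)" for v
  define g where "g v = (\<Sum>w<n. a v w * u w) - d * u v" for v
  have "(\<nu> i - d) * eigen_coeff n \<phi> u i = eigen_coeff n \<phi> g i" if "i < n" for i
    using spectral_decomposition_eigen_coeff_mult[OF sd that, of u]
    unfolding g_def eigen_coeff_def by (simp add: algebra_simps sum_subtractf sum_distrib_left)
  then have "L2_set (\<lambda>i. (\<nu> i - d) * eigen_coeff n \<phi> u i) {..<n} = L2_set (eigen_coeff n \<phi> g) {..<n}"
    by (intro L2_set_cong) auto
  also have "\<dots> = L2_set g {..<n}" by (rule spectral_decomposition_L2_set[OF sd])
  also have "\<dots> \<le> L2_set (\<lambda>_. r / sqrt (real n)) {..<n}"
  proof (rule L2_set_mono[of _ "\<lambda>v. \<bar>g v\<bar>", unfolded L2_set_abs])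
    fix v assume v: "v \<in> {..<n}"
    have "g v = ((\<Sum>w<n. a v w) - d) / sqrt (real n)"
      unfolding g_def u_def by (simp add: sum_divide_distrib diff_divide_distrib)
    then show "\<bar>g v\<bar> \<le> r / sqrt (real n)"
      using rows[of v] v by (simp add: divide_right_mono)
  qed simp
  also have "\<dots> = r" using n rows[of 0] by (simp add: L2_set_constant)
  finally show ?thesis unfolding u_def .
qed

lemma spectral_mixing_bound:
  fixes a \<phi> :: "nat \<Rightarrow> nat \<Rightarrow> real" and \<nu> x y :: "nat \<Rightarrow> real"
  assumes sd: "spectral_decomposition n a \<nu> \<phi>" and n: "1 \<le> n"
    and eig: "\<And>i. 1 \<le> i \<Longrightarrow> i < n \<Longrightarrow> \<bar>\<nu> i\<bar> \<le> lam"
    and rows: "\<And>v. v < n \<Longrightarrow> \<bar>(\<Sum>w<n. a v w) - d\<bar> \<le> R * lam"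
    and lam: "0 \<le> lam" and d: "0 < d" "2 * lam \<le> d" "8 * (R * lam) \<le> d"
  shows "\<bar>(\<Sum>v<n. \<Sum>w<n. a v w * x v * y w) - d / real n * (\<Sum>v<n. x v) * (\<Sum>v<n. y v)\<bar>
     \<le> (6 * R + 1) * lam * L2_set x {..<n} * L2_set y {..<n}"
proof -
  let ?c = "eigen_coeff n \<phi>"
  define t where "t = ?c (\<lambda>_. 1 / sqrt (real n))"
  note L2_c = spectral_decomposition_L2_set[OF sd]
  have t_c: "(\<Sum>i<n. t i * ?c z i) = (\<Sum>v<n. z v) / sqrt (real n)" for z
    unfolding t_def spectral_decomposition_parseval[OF sd] by (simp add: sum_divide_distrib)
  have "L2_set t {..<n} = 1"
    unfolding t_def L2_c L2_set_constant using n by simp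
  then interpret near_regular_spectrum n \<nu> t d lam R
    using n eig lam d spectral_decomposition_degree_deviation[OF sd n rows] unfolding t_def
    by unfold_locales auto
  have "d / real n * (\<Sum>v<n. x v) * (\<Sum>v<n. y v)
      = d * ((\<Sum>v<n. x v) / sqrt (real n)) * ((\<Sum>v<n. y v) / sqrt (real n))"
    using n by (simp add: field_simps)
  then have "(\<Sum>v<n. \<Sum>w<n. a v w * x v * y w) - d / real n * (\<Sum>v<n. x v) * (\<Sum>v<n. y v)
      = (\<Sum>i<n. \<nu> i * ?c x i * ?c y i) - d * (\<Sum>i<n. t i * ?c x i) * (\<Sum>i<n. t i * ?c y i)"
    unfolding spectral_decomposition_bilinear[OF sd] t_c by simp
  with bilinear_bound[of "?c x" "?c y"] show ?thesis unfolding L2_c by simp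
qed

lemma real_card_eq_sum_indicator:
  assumes "finite A" and "S \<subseteq> A"
  shows "real (card S) = (\<Sum>x\<in>A. indicator S x)"
proof -
  have "real (card S) = real (card {x \<in> A. x \<in> S})"
    using assms(2) by (intro arg_cong[where f = "\<lambda>X. real (card X)"]) auto
  also have "\<dots> = (\<Sum>x\<in>{x \<in> A. x \<in> S}. 1)" by (rule real_of_card)
  also have "\<dots> = (\<Sum>x\<in>A. indicator S x)"
    unfolding indicator_def of_bool_def by (rule sum.inter_filter[OF assms(1)])
  finally show ?thesis .
qed

lemma degree_in_eq_sum: "real (degree_in n E v) = (\<Sum>w<n. if E v w then 1 else 0)"
proof -
  have "real (degree_in n E v) = (\<Sum>w<n. indicator {w. w < n \<and> E v w} w)"
    unfolding degree_in_def by (rule real_card_eq_sum_indicator) auto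
  also have "\<dots> = (\<Sum>w<n. if E v w then 1 else 0)" by (rule sum.cong) (auto simp: indicator_def)
  finally show ?thesis .
qed

lemma edges_between_eq_sum:
  assumes "U \<subseteq> {..<n}" and "W \<subseteq> {..<n}"
  shows "real (edges_between E U W)
    = (\<Sum>v<n. \<Sum>w<n. (if E v w then 1 else 0) * indicator U v * indicator W w)"
proof -
  let ?S = "{(u, w). u \<in> U \<and> w \<in> W \<and> E u w}"
  have "real (edges_between E U W) = (\<Sum>p\<in>{..<n} \<times> {..<n}. indicator ?S p)"
    unfolding edges_between_def using assms by (intro real_card_eq_sum_indicator) auto
  also have "\<dots> = (\<Sum>(v, w)\<in>{..<n} \<times> {..<n}. (if E v w then 1 else 0) * indicator U v * indicator W w)"
    by (rule sum.cong) (auto simp: indicator_def split: if_splits)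
  also have "\<dots> = (\<Sum>v<n. \<Sum>w<n. (if E v w then 1 else 0) * indicator U v * indicator W w)"
    by (rule sum.cartesian_product[symmetric])
  finally show ?thesis .
qed

lemma card_eq_sum_indicator: "U \<subseteq> {..<n::nat} \<Longrightarrow> real (card U) = (\<Sum>v<n. indicator U v)"
  by (rule real_card_eq_sum_indicator) auto

lemma L2_set_indicator:
  assumes "U \<subseteq> {..<n::nat}"
  shows "L2_set (indicator U) {..<n} = sqrt (real (card U))"
  unfolding L2_set_def card_eq_sum_indicator[OF assms]
  by (rule arg_cong[where f = sqrt], rule sum.cong) (auto simp: indicator_def)

lemma min_degree_le_degree_in: "v < n \<Longrightarrow> min_degree n E \<le> degree_in n E v"
  unfolding min_degree_def by (intro Min_le) auto

lemma degree_in_le_max_degree: "v < n \<Longrightarrow> degree_in n E v \<le> max_degree n E"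
  unfolding max_degree_def by (intro Max_ge) auto

lemma avg_degree_bounds:
  assumes "1 \<le> n"
  shows "real (min_degree n E) \<le> avg_degree n E" and "avg_degree n E \<le> real (max_degree n E)"
proof -
  have "real n * real (min_degree n E) \<le> (\<Sum>v<n. real (degree_in n E v))"
    using sum_mono[of "{..<n}" "\<lambda>_. real (min_degree n E)"] min_degree_le_degree_in by force
  then show "real (min_degree n E) \<le> avg_degree n E"
    unfolding avg_degree_def using assms by (simp add: field_simps)
  have "(\<Sum>v<n. real (degree_in n E v)) \<le> real n * real (max_degree n E)"
    using sum_mono[of "{..<n}" _ "\<lambda>_. real (max_degree n E)"] degree_in_le_max_degree by force
  then show "avg_degree n E \<le> real (max_degree n E)"
    unfolding avg_degree_def using assms by (simp add: field_simps)
qed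

lemma degree_deviation_le:
  assumes "1 \<le> n" and "v < n"
  shows "\<bar>real (degree_in n E v) - avg_degree n E\<bar> \<le> real (max_degree n E) - real (min_degree n E)"
proof -
  have "real (min_degree n E) \<le> real (degree_in n E v)"
    and "real (degree_in n E v) \<le> real (max_degree n E)"
    using min_degree_le_degree_in[OF assms(2)] degree_in_le_max_degree[OF assms(2)] by simp_all
  then show ?thesis using avg_degree_bounds[OF assms(1), of E] unfolding abs_le_iff by linarith
qed

lemma avg_degree_zero_imp_no_edges:
  assumes "avg_degree n E = 0" and U: "U \<subseteq> {..<n}" and W: "W \<subseteq> {..<n}"
  shows "edges_between E U W = 0"
proof -
  have "\<not> E v w" if "v < n" "w < n" for v w
  proof
    assume "E v w"
    have "0 < real n" using that by simp
    then have "(\<Sum>v<n. real (degree_in n E v)) = 0" using assms(1) unfolding avg_degree_def by simp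
    then have "degree_in n E v = 0" using \<open>v < n\<close> by (simp add: sum_nonneg_eq_0_iff)
    moreover have "w \<in> {u. u < n \<and> E v u}" using \<open>E v w\<close> \<open>w < n\<close> by simp
    ultimately show False unfolding degree_in_def by (metis card_0_eq empty_iff finite_Collect_conjI finite_Collect_less_nat)
  qed
  then have "{(u, w). u \<in> U \<and> w \<in> W \<and> E u w} = {}" using U W by auto
  then show ?thesis unfolding edges_between_def by (metis card.empty)
qed

lemma edge_discrepancy_bound:
  assumes graph: "simple_graph_on n E" and n: "1 \<le> n"
    and eig: "\<And>i. 1 \<le> i \<Longrightarrow> i < n \<Longrightarrow> \<bar>adj_eigenvalues n E ! i\<bar> \<le> lam"
    and degs: "real (max_degree n E) - real (min_degree n E) \<le> R * lam"
    and lam: "0 \<le> lam" and d: "0 < avg_degree n E" "2 * lam \<le> avg_degree n E"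
      "8 * (R * lam) \<le> avg_degree n E"
    and U: "U \<subseteq> {..<n}" and W: "W \<subseteq> {..<n}"
  shows "\<bar>real (edges_between E U W) - avg_degree n E / real n * real (card U) * real (card W)\<bar>
     \<le> (6 * R + 1) * lam * sqrt (real (card U) * real (card W))"
proof -
  obtain \<phi> where sd: "spectral_decomposition n (\<lambda>v w. if E v w then 1 else 0) (\<lambda>i. adj_eigenvalues n E ! i) \<phi>"
    using adj_mat_spectral_decomposition[OF graph] by blast
  have rows: "\<bar>(\<Sum>w<n. if E v w then 1 else 0) - avg_degree n E\<bar> \<le> R * lam" if "v < n" for v
    using degree_deviation_le[OF n that, of E] degs unfolding degree_in_eq_sum by linarith
  have "\<bar>real (edges_between E U W) - avg_degree n E / real n * real (card U) * real (card W)\<bar>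
      \<le> (6 * R + 1) * lam * L2_set (indicator U) {..<n} * L2_set (indicator W) {..<n}"
    using spectral_mixing_bound[OF sd n eig rows lam d, of "indicator U" "indicator W"]
    by (simp only: edges_between_eq_sum[OF U W] card_eq_sum_indicator[OF U] card_eq_sum_indicator[OF W])
  also have "\<dots> = (6 * R + 1) * lam * sqrt (real (card U) * real (card W))"
    unfolding L2_set_indicator[OF U] L2_set_indicator[OF W] by (simp add: real_sqrt_mult)
  finally show ?thesis .
qed

lemma edge_discrepancy_bound_small_ratio:
  assumes graph: "simple_graph_on n E" and n: "2 \<le> n"
    and eig: "\<And>i. 1 \<le> i \<Longrightarrow> i < n \<Longrightarrow> \<bar>adj_eigenvalues n E ! i\<bar> \<le> lam"
    and degs: "real (max_degree n E) - real (min_degree n E) \<le> R * lam"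
    and R: "0 < R" and small: "lam / avg_degree n E < 1 / (8 * R + 8)"
    and U: "U \<subseteq> {..<n}" and W: "W \<subseteq> {..<n}"
  shows "\<bar>real (edges_between E U W) - avg_degree n E / real n * real (card U) * real (card W)\<bar>
     \<le> (10 * R + 1) * lam * sqrt (real (card U) * real (card W))"
proof -
  let ?d = "avg_degree n E"
  have lam: "0 \<le> lam" using eig[of 1] n by fastforce
  have "0 \<le> ?d" unfolding avg_degree_def by (simp add: sum_nonneg)
  then consider "?d = 0" | "0 < ?d" by linarith
  then show ?thesis
  proof cases
    case 1
    then show ?thesis using avg_degree_zero_imp_no_edges[OF 1 U W] R lam by simp
  next
    case 2
    then have "lam * (8 * R + 8) < ?d" using small R by (simp add: field_simps)
    moreover have "lam * (8 * R + 8) = 8 * (R * lam) + 8 * lam" by (simp add: algebra_simps)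
    moreover have "0 \<le> R * lam" using R lam by simp
    ultimately have "2 * lam \<le> ?d" "8 * (R * lam) \<le> ?d" using lam by linarith+
    with edge_discrepancy_bound[OF graph _ eig degs lam 2 _ _ U W] n
    have "\<bar>real (edges_between E U W) - ?d / real n * real (card U) * real (card W)\<bar>
        \<le> (6 * R + 1) * lam * sqrt (real (card U) * real (card W))" by simp
    also have "\<dots> \<le> (10 * R + 1) * lam * sqrt (real (card U) * real (card W))"
      using R lam by (intro mult_right_mono) auto
    finally show ?thesis .
  qed
qed

theorem mainTheorem7:
  fixes G :: "nat \<Rightarrow> nat \<Rightarrow> nat \<Rightarrow> bool" and lam :: "nat \<Rightarrow> real" and R :: real
  assumes graphs: "\<And>n. simple_graph_on n (G n)"
    and eig: "\<And>n i. n \<ge> 1 \<Longrightarrow> 1 \<le> i \<Longrightarrow> i < n \<Longrightarrow> \<bar>adj_eigenvalues n (G n) ! i\<bar> \<le> lam n"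
    and R_pos: "R > 0"
    and degs: "\<And>n. n \<ge> 1 \<Longrightarrow> real (max_degree n (G n)) - real (min_degree n (G n)) \<le> R * lam n"
    and lim: "(\<lambda>n. lam n / avg_degree n (G n)) \<longlonglongrightarrow> 0"
  shows "\<forall>\<^sub>F n in sequentially. \<forall>U W. U \<subseteq> {..<n} \<longrightarrow> W \<subseteq> {..<n} \<longrightarrow>
           \<bar>real (edges_between (G n) U W) - avg_degree n (G n) / real n * real (card U) * real (card W)\<bar>
             \<le> (10 * R + 1) * lam n * sqrt (real (card U) * real (card W))"
proof -
  have "0 < 1 / (8 * R + 8)" using R_pos by simp
  then have "\<forall>\<^sub>F n in sequentially. lam n / avg_degree n (G n) < 1 / (8 * R + 8)"
    by (rule order_tendstoD(2)[OF lim])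
  moreover have "\<forall>\<^sub>F n in sequentially. 2 \<le> n" by (rule eventually_ge_at_top)
  ultimately show ?thesis
  proof eventually_elim
    case (elim n)
    then have "1 \<le> n" by simp
    with elim show ?case
      using edge_discrepancy_bound_small_ratio[OF graphs _ eig degs R_pos] by blast
  qed
qed

end
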